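(* Let $K$ be a non-Archimedean locally compact field of characteristic $p>0$ with group of 1-units $U=1+M_K$. Let $f:U\to U$ be a locally analytic group endomorphism, and suppose there exist $y\in\mathbb{Z}_p$ and an open neighborhood $V$ of $1$ in $U$ such that $f(u)=u^y$ for all $u\in V$. Then $f(u)=u^y$ for all $u\in U$.
   Context: $M_K$ is the maximal ideal of the ring of integers $R_K$ of $K$; with constant field $\mathbb{F}$ of order $q$ and uniformizer $\pi$, $K=\mathbb{F}((\pi))$, $U=1+\pi\mathbb{F}[[\pi]]$, and $|x|=q^{-v(x)}$. A continuous function $f$ on a ball $B_{\alpha,t}=\{u\in R_K:|u-\alpha|\le t\}$, $t=|\rho|$, is analytic there if $f(u)=\sum_{n\ge0}c_n\left(\frac{u-\alpha}{\rho}\right)^n$ with $c_n\in K$, $c_n\to0$; $f:U\to K$ is locally analytic if each $\alpha\in U$ has a ball $B_{\alpha,t_\alpha}\subset U$, $t_\alpha>0$, on which $f$ is analytic. For $y\in\mathbb{Z}_p$ and $u=1+x\in U$, $u^y=\sum_{n\ge0}\binom{y}{n}x^n$. *)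

theory Defs
  imports "HOL-Analysis.Analysis" "HOL-Computational_Algebra.Formal_Laurent_Series"
begin

text \<open>K = F((pi)) is modelled as the type of formal Laurent series over a finite field F
  (type variable 'a of class finite field). Normalised absolute value |x| = q^(-v(x)), q = |F|.\<close>

definition absv :: "'a::{field,finite} fls \<Rightarrow> real" where
  "absv x = (if x = 0 then 0 else real CARD('a) powr (- real_of_int (fls_subdegree x)))"

definition vlim :: "(nat \<Rightarrow> 'a::{field,finite} fls) \<Rightarrow> 'a fls \<Rightarrow> bool" where
  "vlim X L \<longleftrightarrow> (\<lambda>n. absv (X n - L)) \<longlonglongrightarrow> 0"

definition one_units :: "'a::{field,finite} fls set" where
  "one_units = {u. absv (u - 1) < 1}"

definition vball :: "'a::{field,finite} fls \<Rightarrow> real \<Rightarrow> 'a fls set" where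
  "vball \<alpha> t = {u. absv u \<le> 1 \<and> absv (u - \<alpha>) \<le> t}"

definition vcontinuous_on :: "'a::{field,finite} fls set \<Rightarrow> ('a fls \<Rightarrow> 'a fls) \<Rightarrow> bool" where
  "vcontinuous_on S f \<longleftrightarrow> (\<forall>u\<in>S. \<forall>e>0. \<exists>d>0. \<forall>w\<in>S. absv (w - u) < d \<longrightarrow> absv (f w - f u) < e)"

definition analytic_on_ball :: "('a::{field,finite} fls \<Rightarrow> 'a fls) \<Rightarrow> 'a fls \<Rightarrow> 'a fls \<Rightarrow> bool" where
  "analytic_on_ball f \<alpha> \<rho> \<longleftrightarrow> vcontinuous_on (vball \<alpha> (absv \<rho>)) f \<and>
     (\<exists>c::nat \<Rightarrow> 'a fls. (\<lambda>n. absv (c n)) \<longlonglongrightarrow> 0 \<and>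
        (\<forall>u\<in>vball \<alpha> (absv \<rho>). vlim (\<lambda>N. \<Sum>n<N. c n * ((u - \<alpha>) / \<rho>) ^ n) (f u)))"

definition locally_analytic :: "('a::{field,finite} fls \<Rightarrow> 'a fls) \<Rightarrow> bool" where
  "locally_analytic f \<longleftrightarrow> (\<forall>\<alpha>\<in>one_units. \<exists>\<rho>. \<rho> \<noteq> 0 \<and>
      vball \<alpha> (absv \<rho>) \<subseteq> one_units \<and> analytic_on_ball f \<alpha> \<rho>)"

text \<open>Open subsets of U (U is open in K, so this is the subspace topology).\<close>
definition vopen_in_U :: "'a::{field,finite} fls set \<Rightarrow> bool" where
  "vopen_in_U V \<longleftrightarrow> V \<subseteq> one_units \<and>
     (\<forall>v\<in>V. \<exists>e>0. {w. absv (w - v) < e} \<subseteq> V)"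

text \<open>p-adic integers Z_p as the inverse limit of Z/p^k Z: compatible residue sequences
  y k in {0..p^k-1} with y (k+1) mod p^k = y k.\<close>
definition padic_ints :: "nat \<Rightarrow> (nat \<Rightarrow> int) set" where
  "padic_ints p = {y. (\<forall>k. 0 \<le> y k \<and> y k < int p ^ k) \<and> (\<forall>k. y (Suc k) mod int p ^ k = y k)}"

text \<open>Image in F (characteristic p) of binom(y,n) in Z_p: since p^(n+1) > n,
  binom(y,n) is congruent mod p to binom(y_(n+1),n) (Lucas).\<close>
definition padic_binom :: "nat \<Rightarrow> (nat \<Rightarrow> int) \<Rightarrow> nat \<Rightarrow> 'a::{field,finite} fls" where
  "padic_binom p y n = of_nat (nat (y (Suc n)) choose n)"

definition upow :: "nat \<Rightarrow> 'a::{field,finite} fls \<Rightarrow> (nat \<Rightarrow> int) \<Rightarrow> 'a fls" where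
  "upow p u y = (THE s. vlim (\<lambda>N. \<Sum>n<N. padic_binom p y n * (u - 1) ^ n) s)"

end

theory Submission
  imports Defs "HOL-Computational_Algebra.Primes"
begin

unbundle fps_syntax

text \<open>In characteristic \<open>p\<close> the Frobenius \<open>w \<mapsto> w\<^sup>p\<close> is injective and sends \<open>1 + x\<close> to
  \<open>1 + x\<^sup>p\<close>, so \<open>|w\<^sup>p - 1| = |w - 1|\<^sup>p\<close> and iterated \<open>p\<close>-th powers drive every 1-unit into any
  neighbourhood of \<open>1\<close>. Both \<open>f\<close> (a homomorphism) and \<open>u \<mapsto> u\<^sup>y\<close> (a series whose coefficients
  lie in the prime field) commute with \<open>p\<close>-th powers. Hence \<open>f (w\<^sup>p\<^sup>m) = (w\<^sup>p\<^sup>m)\<^sup>y\<close> for large \<open>m\<close>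
  can be pulled back along the injective Frobenius to \<open>f w = w\<^sup>y\<close>.\<close>

lemma CARD_field_gt_1: "real CARD('a::{field,finite}) > 1"
proof -
  have "card {0::'a, 1} \<le> card (UNIV::'a set)" by (rule card_mono) auto
  then show ?thesis by simp
qed

lemma absv_nonneg: "absv (x::'a::{field,finite} fls) \<ge> 0"
  unfolding absv_def by simp

lemma absv_mult:
  fixes a b :: "'a::{field,finite} fls"
  shows "absv (a * b) = absv a * absv b"
  unfolding absv_def by (auto simp: powr_add[symmetric] algebra_simps)

lemma absv_power:
  fixes z :: "'a::{field,finite} fls"
  shows "absv (z ^ n) = absv z ^ n"
proof (induction n)
  case (Suc n) then show ?case by (simp only: power_Suc absv_mult)
qed (simp add: absv_def)

lemma fls_nth_eq_0_if_absv_less_powr: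
  fixes z :: "'a::{field,finite} fls"
  assumes "absv z < real CARD('a) powr (- real_of_int k)" "j \<le> k"
  shows "z $$ j = 0"
proof (cases "z = 0")
  case False
  with assms(1) have "real CARD('a) powr (- real_of_int (fls_subdegree z))
      < real CARD('a) powr (- real_of_int k)"
    unfolding absv_def by simp
  then have "k < fls_subdegree z"
    using CARD_field_gt_1[where 'a='a] by (simp add: powr_less_cancel_iff)
  then show ?thesis using assms(2) by simp
qed simp

lemma absv_le_powr_if_fls_nth_eq_0:
  fixes z :: "'a::{field,finite} fls"
  assumes "\<And>k. k < int N \<Longrightarrow> z $$ k = 0"
  shows "absv z \<le> real CARD('a) powr (- real N)"
proof (cases "z = 0")
  case False
  then have "int N \<le> fls_subdegree z" using fls_subdegree_geI assms by blast
  then show ?thesis using False CARD_field_gt_1[where 'a='a] unfolding absv_def by simp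
qed (simp add: absv_def)

lemma absv_less_1_iff:
  fixes z :: "'a::{field,finite} fls"
  shows "absv z < 1 \<longleftrightarrow> (\<forall>k\<le>0. z $$ k = 0)"
proof
  assume "absv z < 1"
  then show "\<forall>k\<le>0. z $$ k = 0" using fls_nth_eq_0_if_absv_less_powr[of z 0] by auto
next
  assume "\<forall>k\<le>0. z $$ k = 0"
  then have "absv z \<le> real CARD('a) powr (- real (1::nat))"
    by (intro absv_le_powr_if_fls_nth_eq_0) auto
  also have "\<dots> < 1" using CARD_field_gt_1[where 'a='a] by simp
  finally show "absv z < 1" .
qed

lemma fls_nth_power_eq_0_if_absv_less_1:
  fixes x :: "'a::{field,finite} fls"
  assumes "absv x < 1" "k < int n"
  shows "(x ^ n) $$ k = 0"
proof (cases "x = 0")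
  case True
  then show ?thesis using assms(2) by (cases n) auto
next
  case False
  have "\<not> fls_subdegree x \<le> 0"
    using assms(1) nth_fls_subdegree_nonzero[OF False] unfolding absv_less_1_iff by blast
  then have "1 \<le> fls_subdegree x" by simp
  then have "int n \<le> fls_subdegree (x ^ n)"
    using mult_left_mono[of 1 "fls_subdegree x" "int n"] by (simp add: fls_subdegree_pow)
  then show ?thesis using assms(2) by simp
qed

lemma vlim_unique:
  fixes X :: "nat \<Rightarrow> 'a::{field,finite} fls"
  assumes "vlim X a" "vlim X b"
  shows "a = b"
proof (rule fls_eqI)
  fix k :: int
  define r where "r = real CARD('a) powr (- real_of_int k)"
  have "r > 0" unfolding r_def using CARD_field_gt_1[where 'a='a] by simp
  then have "eventually (\<lambda>n. absv (X n - a) < r \<and> absv (X n - b) < r) sequentially"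
    using assms unfolding vlim_def by (intro eventually_conj order_tendstoD)
  then obtain n where "absv (X n - a) < r" "absv (X n - b) < r"
    by (auto simp: eventually_sequentially)
  then have "(X n - a) $$ k = 0" "(X n - b) $$ k = 0"
    unfolding r_def using fls_nth_eq_0_if_absv_less_powr by blast+
  then show "a $$ k = b $$ k" by simp
qed

text \<open>Below index \<open>N\<close> the partial sums are already stable, since \<open>x\<^sup>n\<close> has subdegree \<open>\<ge> n\<close>;
  the limit is read off coefficientwise.\<close>

lemma vlim_power_series_ex:
  fixes x :: "'a::{field,finite} fls" and d :: "nat \<Rightarrow> 'a"
  assumes "absv x < 1"
  shows "\<exists>L. vlim (\<lambda>N. \<Sum>n<N. fls_const (d n) * x ^ n) L"
proof -
  define S where "S N = (\<Sum>n<N. fls_const (d n) * x ^ n)" for N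
  have S_nth: "S N $$ k = (\<Sum>n<N. d n * (x ^ n) $$ k)" for N k
    unfolding S_def by (simp add: fls_nth_sum)
  note vanish = fls_nth_power_eq_0_if_absv_less_1[OF assms]
  have stable: "S N $$ k = S M $$ k" if "k < int N" "k < int M" for N M k
  proof -
    have "S N $$ k = (\<Sum>n<min N M. d n * (x ^ n) $$ k)"
      unfolding S_nth by (rule sum.mono_neutral_right) (use vanish that in auto)
    also have "\<dots> = S M $$ k"
      unfolding S_nth by (rule sum.mono_neutral_left) (use vanish that in auto)
    finally show ?thesis .
  qed
  define L where "L = fps_to_fls (Abs_fps (\<lambda>j. S (Suc j) $$ int j))"
  have "(S N - L) $$ k = 0" if "k < int N" for N k
  proof (cases "k < 0")
    case True then show ?thesis using vanish by (simp add: L_def S_nth)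
  next
    case False
    then show ?thesis using stable[of k N "Suc (nat k)"] that by (simp add: L_def)
  qed
  then have bound: "absv (S N - L) \<le> inverse (real CARD('a)) ^ N" for N
    using absv_le_powr_if_fls_nth_eq_0[of N "S N - L"] CARD_field_gt_1[where 'a='a]
    by (simp add: powr_minus powr_realpow power_inverse)
  have geometric: "(\<lambda>N. inverse (real CARD('a)) ^ N) \<longlonglongrightarrow> 0"
    using CARD_field_gt_1[where 'a='a] by (intro LIMSEQ_realpow_zero) (auto simp: inverse_less_1_iff)
  have "vlim S L"
    unfolding vlim_def
    by (rule tendsto_sandwich[OF _ _ tendsto_const geometric]) (auto simp: absv_nonneg bound)
  then show ?thesis unfolding S_def by blast
qed

lemma upow_vlim:
  fixes u :: "'a::{field,finite} fls"
  assumes "absv (u - 1) < 1"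
  shows "vlim (\<lambda>N. \<Sum>n<N. padic_binom p y n * (u - 1) ^ n) (upow p u y)"
proof -
  have "padic_binom p y n = (fls_const (of_nat (nat (y (Suc n)) choose n)) :: 'a fls)" for n
    unfolding padic_binom_def by (rule fls_of_nat)
  then obtain L where L: "vlim (\<lambda>N. \<Sum>n<N. padic_binom p y n * (u - 1) ^ n) L"
    using vlim_power_series_ex[OF assms] by presburger
  then have "upow p u y = L"
    unfolding upow_def using vlim_unique by blast
  then show ?thesis using L by simp
qed

lemma CHAR_power_diff:
  fixes a b :: "'a::comm_ring_1"
  assumes "prime p" "CHAR('a) = p"
  shows "(a - b) ^ p = a ^ p - b ^ p"
proof -
  have "(a + - b) ^ p = a ^ p + (- b) ^ p"
    by (rule freshmans_dream) (use assms in auto)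
  also have "(- b) ^ p = - (b ^ p)"
    by (rule minus_power_prime_CHAR) (use assms in auto)
  finally show ?thesis by simp
qed

lemma CHAR_power_inj:
  fixes a b :: "'a::idom"
  assumes "prime p" "CHAR('a) = p" "a ^ p = b ^ p"
  shows "a = b"
proof -
  have "(a - b) ^ p = 0" unfolding CHAR_power_diff[OF assms(1,2)] assms(3) by (rule diff_self)
  then show ?thesis by (simp only: power_eq_0_iff right_minus_eq)
qed

lemma CHAR_of_nat_power:
  assumes "prime p" "CHAR('a::comm_semiring_1) = p"
  shows "(of_nat m :: 'a) ^ p = of_nat m"
proof -
  have "(\<Sum>i<m. 1 :: 'a) ^ p = (\<Sum>i<m. 1 ^ p)"
    using freshmans_dream_sum assms by blast
  then show ?thesis by (simp only: power_one sum_constant card_lessThan mult.right_neutral of_nat_id)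
qed

lemma CHAR_fls_power_diff:
  fixes a b :: "'a::{field,finite} fls"
  assumes "prime p" "CHAR('a) = p"
  shows "(a - b) ^ p = a ^ p - b ^ p"
  by (rule CHAR_power_diff) (use assms in simp_all)

lemma vlim_power_CHAR:
  fixes X :: "nat \<Rightarrow> 'a::{field,finite} fls"
  assumes "prime p" "CHAR('a) = p" "vlim X L"
  shows "vlim (\<lambda>N. X N ^ p) (L ^ p)"
proof -
  have "(\<lambda>N. absv (X N - L) ^ p) \<longlonglongrightarrow> 0 ^ p"
    using assms(3) unfolding vlim_def by (intro tendsto_power)
  moreover have "0 ^ p = (0::real)" using prime_gt_0_nat[OF assms(1)] by simp
  moreover have "absv (X N ^ p - L ^ p) = absv (X N - L) ^ p" for N
    by (simp only: CHAR_fls_power_diff[OF assms(1,2), symmetric] absv_power)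
  ultimately show ?thesis unfolding vlim_def by simp
qed

lemma upow_power_CHAR:
  fixes u :: "'a::{field,finite} fls"
  assumes "prime p" "CHAR('a) = p" "absv (u - 1) < 1"
  shows "upow p (u ^ p) y = upow p u y ^ p"
proof -
  have CHAR_fls: "CHAR('a fls) = p" using assms(2) by simp
  have frob_1: "u ^ p - 1 = (u - 1) ^ p"
    using CHAR_fls_power_diff[OF assms(1,2), of u 1] by simp
  have frob_term: "(padic_binom p y n * (u - 1) ^ n) ^ p = padic_binom p y n * (u ^ p - 1) ^ n"
    for n
  proof -
    have "(padic_binom p y n * (u - 1) ^ n) ^ p = padic_binom p y n ^ p * ((u - 1) ^ p) ^ n"
      by (simp add: power_mult_distrib flip: power_mult) (simp add: mult.commute)
    moreover have "padic_binom p y n ^ p = (padic_binom p y n :: 'a fls)"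
      unfolding padic_binom_def by (rule CHAR_of_nat_power[OF assms(1) CHAR_fls])
    ultimately show ?thesis by (simp only: frob_1)
  qed
  have "(\<Sum>n<N. padic_binom p y n * (u - 1) ^ n) ^ p
      = (\<Sum>n<N. padic_binom p y n * (u ^ p - 1) ^ n)" for N
  proof -
    have "(\<Sum>n<N. padic_binom p y n * (u - 1) ^ n) ^ p
        = (\<Sum>n<N. (padic_binom p y n * (u - 1) ^ n) ^ p)"
      by (rule freshmans_dream_sum) (use assms(1) CHAR_fls in auto)
    then show ?thesis by (simp only: frob_term)
  qed
  then have "vlim (\<lambda>N. \<Sum>n<N. padic_binom p y n * (u ^ p - 1) ^ n) (upow p u y ^ p)"
    using vlim_power_CHAR[OF assms(1,2) upow_vlim[OF assms(3), of p y]] by simp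
  moreover have "absv (u ^ p - 1) < 1"
    unfolding frob_1 absv_power using assms(3) prime_gt_0_nat[OF assms(1)]
    by (simp add: power_less_one_iff[OF absv_nonneg])
  ultimately show ?thesis using upow_vlim vlim_unique by blast
qed

lemma one_units_mult:
  fixes u v :: "'a::{field,finite} fls"
  assumes "u \<in> one_units" "v \<in> one_units"
  shows "u * v \<in> one_units"
proof -
  have u: "absv (u - 1) < 1" and v: "absv (v - 1) < 1"
    using assms unfolding one_units_def by auto
  then have uv: "absv ((u - 1) * (v - 1)) < 1"
    unfolding absv_mult using absv_nonneg by (metis mult_strict_mono' mult_1)
  have split: "u * v - 1 = (u - 1) * (v - 1) + (u - 1) + (v - 1)" by (simp add: algebra_simps)
  have "\<forall>k\<le>0. (u * v - 1) $$ k = 0"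
    using u v uv unfolding split absv_less_1_iff by simp
  then show ?thesis unfolding one_units_def absv_less_1_iff by simp
qed

lemma one_units_power:
  fixes u :: "'a::{field,finite} fls"
  assumes "u \<in> one_units"
  shows "u ^ Suc n \<in> one_units"
  by (induction n) (use assms one_units_mult in auto)

lemma mult_hom_power_one_units:
  fixes f :: "'a::{field,finite} fls \<Rightarrow> 'a fls"
  assumes "\<forall>u\<in>one_units. \<forall>v\<in>one_units. f (u * v) = f u * f v" "w \<in> one_units"
  shows "f (w ^ Suc n) = f w ^ Suc n"
proof (induction n)
  case (Suc n)
  have "f (w ^ Suc (Suc n)) = f (w * w ^ Suc n)" by simp
  also have "\<dots> = f w * f (w ^ Suc n)" using assms one_units_power by blast
  finally show ?case using Suc by simp
qed simp

lemma power_prime_power_less: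
  fixes r e :: real
  assumes "prime p" "0 \<le> r" "r < 1" "e > 0"
  obtains m where "r ^ (p ^ m) < e"
proof -
  obtain m where m: "r ^ m < e"
    using real_arch_pow_inv[OF assms(4,3)] by blast
  have "m < 2 ^ m" by (rule less_exp)
  also have "(2::nat) ^ m \<le> p ^ m"
    using prime_ge_2_nat[OF assms(1)] by (rule power_mono) simp
  finally have "r ^ (p ^ m) \<le> r ^ m" using assms(2,3) by (simp add: power_decreasing)
  with m that show ?thesis by (meson le_less_trans)
qed

lemma eq_on_one_units_if_eq_near_1_and_commute_power_CHAR:
  fixes f g :: "'a::{field,finite} fls \<Rightarrow> 'a fls"
  assumes "prime p" "CHAR('a) = p"
    and f: "\<forall>w\<in>one_units. f (w ^ p) = f w ^ p"
    and g: "\<forall>w\<in>one_units. g (w ^ p) = g w ^ p"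
    and "e > 0" and near: "\<forall>w\<in>one_units. absv (w - 1) < e \<longrightarrow> f w = g w"
  shows "\<forall>w\<in>one_units. f w = g w"
proof
  have CHAR_fls: "CHAR('a fls) = p" using assms(2) by simp
  have unit_power: "w ^ p \<in> one_units" if "w \<in> one_units" for w :: "'a fls"
    using one_units_power[OF that, of "p - 1"] prime_gt_0_nat[OF assms(1)] by simp
  have absv_power_1: "absv (w ^ p - 1) = absv (w - 1) ^ p" for w :: "'a fls"
    by (metis CHAR_fls_power_diff[OF assms(1,2)] absv_power power_one)
  have descent: "\<forall>w\<in>one_units. absv (w - 1) ^ (p ^ m) < e \<longrightarrow> f w = g w" for m
  proof (induction m)
    case (Suc m)
    show ?case
    proof (intro ballI impI)
      fix w :: "'a fls" assume w: "w \<in> one_units" "absv (w - 1) ^ (p ^ Suc m) < e"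
      have "f w ^ p = f (w ^ p)" using f w(1) by simp
      also have "\<dots> = g (w ^ p)"
        using Suc w unit_power by (simp add: absv_power_1 power_mult flip: power_Suc2)
      also have "\<dots> = g w ^ p" using g w(1) by simp
      finally show "f w = g w" by (rule CHAR_power_inj[OF assms(1) CHAR_fls])
    qed
  qed (use near in simp)
  fix u :: "'a fls" assume u: "u \<in> one_units"
  then have "0 \<le> absv (u - 1)" "absv (u - 1) < 1" by (simp_all add: absv_nonneg one_units_def)
  then obtain m where "absv (u - 1) ^ (p ^ m) < e"
    using power_prime_power_less[OF assms(1) _ _ \<open>e > 0\<close>] by blast
  then show "f u = g u" using descent u by blast
qed

theorem lemma2p5:
  fixes f :: "'a::{field,finite} fls \<Rightarrow> 'a fls"
    and p :: nat and y :: "nat \<Rightarrow> int" and V :: "'a fls set"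
  assumes "prime p" and "CHAR('a) = p"
    and "y \<in> padic_ints p"
    and "\<forall>u\<in>one_units. f u \<in> one_units"
    and "\<forall>u\<in>one_units. \<forall>v\<in>one_units. f (u * v) = f u * f v"
    and "locally_analytic f"
    and "vopen_in_U V" and "1 \<in> V"
    and "\<forall>u\<in>V. f u = upow p u y"
  shows "\<forall>u\<in>one_units. f u = upow p u y"
proof -
  obtain e where "e > 0" "{w. absv (w - 1) < e} \<subseteq> V"
    using assms(7,8) unfolding vopen_in_U_def by blast
  then have near: "\<forall>w\<in>one_units. absv (w - 1) < e \<longrightarrow> f w = upow p w y"
    using assms(9) by auto
  obtain k where p: "p = Suc k" using prime_gt_0_nat[OF assms(1)] gr0_implies_Suc by blast
  have "f (w ^ p) = f w ^ p" if "w \<in> one_units" for w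
    unfolding p by (rule mult_hom_power_one_units[OF assms(5) that])
  moreover have "upow p (w ^ p) y = upow p w y ^ p" if "w \<in> one_units" for w :: "'a fls"
    using that by (intro upow_power_CHAR[OF assms(1,2)]) (simp add: one_units_def)
  ultimately show ?thesis
    using eq_on_one_units_if_eq_near_1_and_commute_power_CHAR[OF assms(1,2) _ _ \<open>e > 0\<close> near]
    by blast
qed

end
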